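(* Consider an exponential bottleneck game on a graph $G$, a Nash-routing $\mathbf{p}=[p_1,\dots,p_N]$ and a routing $\mathbf{p}^*=[p_1^*,\dots,p_N^*]$ of minimum social cost $C^*=C(\mathbf{p}^* )=M$, and suppose $L^*\ge2$. Let $\hat C=\lceil\max_i\log_2\widetilde C_i(\mathbf{p})\rceil$ and $l_1^*=\log_2(L^*-1)$. If $k$ is a positive integer with $\hat C-k>8M+l_1^*+2$, then every non-empty set of players $S\subseteq S^{(1)}\cup S^{(2)}\cup\dots\cup S^{(k)}$ is not self-sufficient in $\mathbf{p}$.
   Context: Player $\pi_i$ has a strategy set $\mathcal{P}_i$ of paths from $u_i$ to $v_i$; a routing is $\mathbf{p}=[p_1,\dots,p_N]$ with $p_i\in\mathcal{P}_i$. $C_e(\mathbf{p})$ is the number of paths in $\mathbf{p}$ using edge $e$; social cost $C(\mathbf{p})=\max_eC_e(\mathbf{p})$; player cost $\widetilde C_i(\mathbf{p})=\sum_{e\in p_i}2^{C_e(\mathbf{p})}$. A Nash-routing is one in which no player can strictly lower its cost by unilaterally switching to another path in its strategy set. $L^*$ is the maximum length of a path in $\mathbf{p}^*$. Stage $i$ ($1\le i\le\hat C$): $S^{(i)}$ is the set of players $\pi_j$ with $2^{\hat C-i}+2\le\widetilde C_j(\mathbf{p})\le 2^{\hat C-i+1}$. Self-sufficiency: for a set $S$ of players and $\pi_j\in S$, let $\mathbf{q}_j$ be the routing consisting only of the players in $S$, where every player of $S$ other than $\pi_j$ uses its path from $\mathbf{p}$ and $\pi_j$ uses $p_j^*$ (congestions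 in $\mathbf{q}_j$ count only these paths). $S$ is self-sufficient in $\mathbf{p}$ if for every $\pi_j\in S$, $\sum_{e\in p_j^*}2^{C_e(\mathbf{q}_j)}\ge\widetilde C_j(\mathbf{p})$. *)

theory Defs
  imports Complex_Main
begin

definition pedges :: "'v list \<Rightarrow> ('v \<times> 'v) set" where
  "pedges xs = set (zip xs (tl xs))"

definition plen :: "'v list \<Rightarrow> nat" where
  "plen xs = length xs - 1"

definition is_path :: "('v \<times> 'v) set \<Rightarrow> 'v \<Rightarrow> 'v \<Rightarrow> 'v list \<Rightarrow> bool" where
  "is_path E u v xs \<longleftrightarrow> xs \<noteq> [] \<and> hd xs = u \<and> last xs = v \<and> distinct xs
     \<and> pedges xs \<subseteq> E"

definition routing_game :: "('v \<times> 'v) set \<Rightarrow> nat \<Rightarrow> (nat \<Rightarrow> 'v) \<Rightarrow> (nat \<Rightarrow> 'v)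
    \<Rightarrow> (nat \<Rightarrow> 'v list set) \<Rightarrow> bool" where
  "routing_game E N s t P \<longleftrightarrow> finite E \<and>
     (\<forall>i<N. P i \<noteq> {} \<and> P i \<subseteq> {xs. is_path E (s i) (t i) xs})"

definition routing :: "nat \<Rightarrow> (nat \<Rightarrow> 'v list set) \<Rightarrow> (nat \<Rightarrow> 'v list) \<Rightarrow> bool" where
  "routing N P p \<longleftrightarrow> (\<forall>i<N. p i \<in> P i)"

definition cong :: "nat \<Rightarrow> (nat \<Rightarrow> 'v list) \<Rightarrow> 'v \<times> 'v \<Rightarrow> nat" where
  "cong N p e = card {i. i < N \<and> e \<in> pedges (p i)}"

definition social_cost :: "('v \<times> 'v) set \<Rightarrow> nat \<Rightarrow> (nat \<Rightarrow> 'v list) \<Rightarrow> nat" where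
  "social_cost E N p = Max (insert 0 (cong N p ` E))"

definition pcost :: "nat \<Rightarrow> (nat \<Rightarrow> 'v list) \<Rightarrow> nat \<Rightarrow> nat" where
  "pcost N p i = (\<Sum>e\<in>pedges (p i). 2 ^ cong N p e)"

definition nash_routing :: "nat \<Rightarrow> (nat \<Rightarrow> 'v list set) \<Rightarrow> (nat \<Rightarrow> 'v list) \<Rightarrow> bool" where
  "nash_routing N P p \<longleftrightarrow> routing N P p \<and>
     (\<forall>i<N. \<forall>q\<in>P i. pcost N p i \<le> pcost N (p(i := q)) i)"

definition optimal_routing :: "('v \<times> 'v) set \<Rightarrow> nat \<Rightarrow> (nat \<Rightarrow> 'v list set)
    \<Rightarrow> (nat \<Rightarrow> 'v list) \<Rightarrow> bool" where
  "optimal_routing E N P ps \<longleftrightarrow> routing N P ps \<and>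
     (\<forall>q. routing N P q \<longrightarrow> social_cost E N ps \<le> social_cost E N q)"

definition Lstar :: "nat \<Rightarrow> (nat \<Rightarrow> 'v list) \<Rightarrow> nat" where
  "Lstar N ps = Max ((\<lambda>i. plen (ps i)) ` {..<N})"

definition Chat :: "nat \<Rightarrow> (nat \<Rightarrow> 'v list) \<Rightarrow> int" where
  "Chat N p = \<lceil>Max ((\<lambda>i. log 2 (real (pcost N p i))) ` {..<N})\<rceil>"

definition stage :: "nat \<Rightarrow> (nat \<Rightarrow> 'v list) \<Rightarrow> nat \<Rightarrow> nat set" where
  "stage N p i = {j. j < N \<and>
      2 powr (real_of_int (Chat N p - int i)) + 2 \<le> real (pcost N p j) \<and>
      real (pcost N p j) \<le> 2 powr (real_of_int (Chat N p - int i + 1))}"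

(* congestion in q_j: players of S other than j use p, player j uses p^*_j *)
definition cong_sub :: "nat set \<Rightarrow> (nat \<Rightarrow> 'v list) \<Rightarrow> (nat \<Rightarrow> 'v list) \<Rightarrow> nat
    \<Rightarrow> 'v \<times> 'v \<Rightarrow> nat" where
  "cong_sub S p ps j e = card {l \<in> S - {j}. e \<in> pedges (p l)}
      + (if e \<in> pedges (ps j) then 1 else 0)"

definition self_sufficient :: "nat \<Rightarrow> (nat \<Rightarrow> 'v list) \<Rightarrow> (nat \<Rightarrow> 'v list) \<Rightarrow> nat set \<Rightarrow> bool" where
  "self_sufficient N p ps S \<longleftrightarrow>
     (\<forall>j\<in>S. (\<Sum>e\<in>pedges (ps j). (2::nat) ^ cong_sub S p ps j e) \<ge> pcost N p j)"

end

theory Submission imports Defs begin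

text \<open>Let \<open>c e\<close> be the number of players of \<open>S\<close> whose path in \<open>p\<close> uses \<open>e\<close>, and \<open>m e\<close> the
  number whose path in \<open>p\<^sup>*\<close> does, so \<open>m e \<le> M\<close>. Counting edge by edge, the total cost
  \<open>T\<close> of \<open>S\<close> is at least \<open>\<Sum>\<^sub>e c e 2\<^bsup>c e\<^esup>\<close>, while self-sufficiency gives
  \<open>T \<le> 2 \<Sum>\<^sub>e m e 2\<^bsup>c e\<^esup>\<close>. Edges with \<open>c e < 4M\<close> contribute at most \<open>2\<^bsup>4M\<^esup>\<close> each to the
  latter sum; on the others \<open>4 m e 2\<^bsup>c e\<^esup> \<le> c e 2\<^bsup>c e\<^esup>\<close>, so they are absorbed by \<open>T\<close>.
  Hence \<open>T \<le> 4M |S| L\<^sup>* 2\<^bsup>4M\<^esup>\<close>, whereas every player of the first \<open>k\<close> stages pays more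
  than \<open>2\<^bsup>\<hat>C-k\<^esup> > 2\<^bsup>8M+2\<^esup>(L\<^sup>*-1) \<ge> 4M L\<^sup>* 2\<^bsup>4M\<^esup>\<close>.\<close>

lemma sum_sum_eq_sum_card_mult:
  fixes f :: "'e \<Rightarrow> 'a::comm_semiring_1"
  assumes "finite S" "finite U" "\<And>j. j \<in> S \<Longrightarrow> A j \<subseteq> U"
  shows "(\<Sum>j\<in>S. \<Sum>e\<in>A j. f e) = (\<Sum>e\<in>U. of_nat (card {j\<in>S. e \<in> A j}) * f e)"
proof -
  have "(\<Sum>j\<in>S. \<Sum>e\<in>A j. f e) = (\<Sum>j\<in>S. \<Sum>e\<in>U. if e \<in> A j then f e else 0)"
  proof (rule sum.cong[OF refl])
    fix j assume "j \<in> S"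
    then have "U \<inter> A j = A j" using assms(3) by blast
    then show "(\<Sum>e\<in>A j. f e) = (\<Sum>e\<in>U. if e \<in> A j then f e else 0)"
      using sum.inter_restrict[OF assms(2), of f "A j"] by simp
  qed
  also have "\<dots> = (\<Sum>e\<in>U. \<Sum>j\<in>S. if e \<in> A j then f e else 0)"
    by (rule sum.swap)
  also have "\<dots> = (\<Sum>e\<in>U. of_nat (card {j\<in>S. e \<in> A j}) * f e)"
  proof (rule sum.cong[OF refl])
    fix e
    show "(\<Sum>j\<in>S. if e \<in> A j then f e else 0) = of_nat (card {j\<in>S. e \<in> A j}) * f e"
      using sum.inter_filter[OF assms(1), of "\<lambda>_. f e" "\<lambda>j. e \<in> A j"] by simp
  qed
  finally show ?thesis .
qed

text \<open>The factor \<open>M\<close> is free (\<open>m \<le> M * m\<close>) but keeps the final estimate valid when \<open>M = 0\<close>.\<close>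

lemma mult_two_pow_le_threshold:
  fixes m M c a :: nat
  assumes "m \<le> M"
  shows "a * m * 2 ^ c \<le> a * M * m * 2 ^ (a * M) + c * 2 ^ c"
proof (cases "c < a * M")
  case True
  have "a * m * 2 ^ c \<le> a * m * 2 ^ (a * M)"
    using True by simp
  also have "\<dots> \<le> a * M * m * 2 ^ (a * M)"
    using assms by (cases "m = 0") (simp_all add: mult_le_mono)
  finally show ?thesis by linarith
next
  case False
  then have "a * m \<le> c"
    using assms by (meson le_trans mult_le_mono2 not_less)
  then show ?thesis by (metis mult_le_mono1 trans_le_add2)
qed

text \<open>\<open>A j\<close> and \<open>B j\<close> stand for the edge sets of player \<open>j\<close> in \<open>p\<close> and in \<open>p\<^sup>*\<close>.\<close>

lemma sum_cost_le_by_load: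
  fixes cost :: "'i \<Rightarrow> nat" and A B :: "'i \<Rightarrow> 'e set"
  assumes fin: "finite S" "\<And>j. j \<in> S \<Longrightarrow> finite (A j)" "\<And>j. j \<in> S \<Longrightarrow> finite (B j)"
    and load_B: "\<And>e. card {j\<in>S. e \<in> B j} \<le> M"
    and lower: "\<And>j. j \<in> S \<Longrightarrow> (\<Sum>e\<in>A j. 2 ^ card {l\<in>S. e \<in> A l}) \<le> cost j"
    and upper: "\<And>j. j \<in> S \<Longrightarrow> cost j \<le> (\<Sum>e\<in>B j. 2 * 2 ^ card {l\<in>S. e \<in> A l})"
  shows "(\<Sum>j\<in>S. cost j) \<le> 4 * M * (\<Sum>j\<in>S. card (B j)) * 2 ^ (4 * M)"
proof -
  define c where "c e = card {l\<in>S. e \<in> A l}" for e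
  define m where "m e = card {l\<in>S. e \<in> B l}" for e
  define U where "U = (\<Union>j\<in>S. A j) \<union> (\<Union>j\<in>S. B j)"
  have "finite U" using fin unfolding U_def by blast
  note count = sum_sum_eq_sum_card_mult[OF \<open>finite S\<close> this]
  have A_U: "A j \<subseteq> U" and B_U: "B j \<subseteq> U" if "j \<in> S" for j
    using that unfolding U_def by blast+
  have "(\<Sum>e\<in>U. c e * 2 ^ c e) = (\<Sum>j\<in>S. \<Sum>e\<in>A j. 2 ^ c e)"
    using count[OF A_U, where f = "\<lambda>e. (2::nat) ^ c e"] by (simp add: c_def)
  also have "\<dots> \<le> (\<Sum>j\<in>S. cost j)"
    using lower unfolding c_def by (intro sum_mono) auto
  finally have lower_sum: "(\<Sum>e\<in>U. c e * 2 ^ c e) \<le> (\<Sum>j\<in>S. cost j)" .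
  have "2 * (\<Sum>j\<in>S. cost j) \<le> 2 * (\<Sum>j\<in>S. \<Sum>e\<in>B j. 2 * 2 ^ c e)"
    using upper unfolding c_def by (intro mult_le_mono2 sum_mono) auto
  also have "\<dots> = (\<Sum>e\<in>U. 4 * m e * 2 ^ c e)"
    using count[OF B_U, where f = "\<lambda>e. (2::nat) * 2 ^ c e"]
    by (simp add: m_def sum_distrib_left mult.assoc)
  also have "\<dots> \<le> (\<Sum>e\<in>U. 4 * M * m e * 2 ^ (4 * M) + c e * 2 ^ c e)"
    using load_B unfolding m_def by (intro sum_mono mult_two_pow_le_threshold) auto
  also have "\<dots> = 4 * M * (\<Sum>e\<in>U. m e) * 2 ^ (4 * M) + (\<Sum>e\<in>U. c e * 2 ^ c e)"
    by (simp add: sum.distrib sum_distrib_left sum_distrib_right mult.assoc)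
  also have "(\<Sum>e\<in>U. m e) = (\<Sum>j\<in>S. card (B j))"
    using count[OF B_U, where f = "\<lambda>_. 1::nat"] by (simp add: m_def)
  finally show ?thesis using lower_sum by linarith
qed

definition load :: "nat set \<Rightarrow> (nat \<Rightarrow> 'v list) \<Rightarrow> 'v \<times> 'v \<Rightarrow> nat" where
  "load S q e = card {l\<in>S. e \<in> pedges (q l)}"

lemma finite_pedges [simp]: "finite (pedges xs)"
  by (simp add: pedges_def)

lemma card_pedges_le_plen: "card (pedges xs) \<le> plen xs"
  unfolding pedges_def plen_def using card_length[of "zip xs (tl xs)"] by simp

lemma plen_le_Lstar: "j < N \<Longrightarrow> plen (ps j) \<le> Lstar N ps"
  unfolding Lstar_def by (intro Max_ge) auto

lemma load_le_cong: "S \<subseteq> {..<N} \<Longrightarrow> load S q e \<le> cong N q e"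
  unfolding load_def cong_def by (intro card_mono) auto

lemma cong_sub_le_Suc_load:
  assumes "finite S"
  shows "cong_sub S p ps j e \<le> Suc (load S p e)"
proof -
  have "card {l \<in> S - {j}. e \<in> pedges (p l)} \<le> load S p e"
    unfolding load_def using assms by (intro card_mono) auto
  then show ?thesis unfolding cong_sub_def by simp
qed

lemma pedges_subset_edges:
  assumes "routing_game E N s t P" "routing N P q" "j < N"
  shows "pedges (q j) \<subseteq> E"
  using assms unfolding routing_game_def routing_def is_path_def by blast

lemma load_le_social_cost:
  assumes "routing_game E N s t P" "routing N P q" "S \<subseteq> {..<N}"
  shows "load S q e \<le> social_cost E N q"
proof (cases "e \<in> E")
  case True
  have "finite E" using assms(1) unfolding routing_game_def by simp
  with True have "cong N q e \<le> social_cost E N q"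
    unfolding social_cost_def by (intro Max_ge) auto
  then show ?thesis using load_le_cong[OF assms(3)] le_trans by blast
next
  case False
  then have "{l\<in>S. e \<in> pedges (q l)} = {}"
    using pedges_subset_edges[OF assms(1,2)] assms(3) by blast
  then show ?thesis unfolding load_def by (metis card.empty zero_le)
qed

lemma self_sufficient_sum_pcost_le:
  assumes "routing_game E N s t P" "routing N P ps" "S \<subseteq> {..<N}"
    and "self_sufficient N p ps S"
  shows "(\<Sum>j\<in>S. pcost N p j)
           \<le> 4 * social_cost E N ps * (card S * Lstar N ps) * 2 ^ (4 * social_cost E N ps)"
proof -
  have "finite S" using assms(3) finite_subset by blast
  have cost: "(\<Sum>j\<in>S. pcost N p j)
          \<le> 4 * social_cost E N ps * (\<Sum>j\<in>S. card (pedges (ps j))) * 2 ^ (4 * social_cost E N ps)"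
  proof (rule sum_cost_le_by_load[OF \<open>finite S\<close>])
    fix j assume "j \<in> S"
    show "(\<Sum>e\<in>pedges (p j). 2 ^ card {l\<in>S. e \<in> pedges (p l)}) \<le> pcost N p j"
      unfolding pcost_def using load_le_cong[OF assms(3)]
      by (intro sum_mono power_increasing) (auto simp: load_def)
    have "pcost N p j \<le> (\<Sum>e\<in>pedges (ps j). 2 ^ cong_sub S p ps j e)"
      using assms(4) \<open>j \<in> S\<close> unfolding self_sufficient_def by blast
    also have "\<dots> \<le> (\<Sum>e\<in>pedges (ps j). 2 ^ Suc (load S p e))"
      using cong_sub_le_Suc_load[OF \<open>finite S\<close>] by (intro sum_mono power_increasing) auto
    finally show "pcost N p j \<le> (\<Sum>e\<in>pedges (ps j). 2 * 2 ^ card {l\<in>S. e \<in> pedges (p l)})"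
      by (simp add: load_def)
  next
    fix e show "card {j\<in>S. e \<in> pedges (ps j)} \<le> social_cost E N ps"
      using load_le_social_cost[OF assms(1-3)] unfolding load_def .
  qed auto
  have "(\<Sum>j\<in>S. card (pedges (ps j))) \<le> (\<Sum>j\<in>S. Lstar N ps)"
  proof (rule sum_mono)
    fix j assume "j \<in> S"
    then have "plen (ps j) \<le> Lstar N ps" using assms(3) plen_le_Lstar by blast
    then show "card (pedges (ps j)) \<le> Lstar N ps" using card_pedges_le_plen le_trans by blast
  qed
  then have "(\<Sum>j\<in>S. card (pedges (ps j))) \<le> card S * Lstar N ps" by simp
  with cost show ?thesis by (meson le_trans mult_le_mono1 mult_le_mono2)
qed

lemma stage_pcost_lower:
  assumes "j \<in> (\<Union>i\<in>{1..k}. stage N p i)"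
  shows "2 powr real_of_int (Chat N p - int k) + 2 \<le> real (pcost N p j)"
proof -
  obtain i where i: "i \<in> {1..k}" "j \<in> stage N p i" using assms by blast
  then have "2 powr real_of_int (Chat N p - int k) \<le> 2 powr real_of_int (Chat N p - int i)"
    by (intro powr_mono) simp_all
  moreover have "2 powr real_of_int (Chat N p - int i) + 2 \<le> real (pcost N p j)"
    using i(2) unfolding stage_def by blast
  ultimately show ?thesis by linarith
qed

lemma cost_bound_less_two_powr:
  fixes M L :: nat and d :: real
  assumes "L \<ge> 2" "d > 8 * real M + log 2 (real L - 1) + 2"
  shows "real (4 * M * L * 2 ^ (4 * M)) < 2 powr d"
proof -
  have "2 * M \<le> 2 ^ (4 * M)"
  proof -
    have "2 * M \<le> 2 ^ (M + 1)" using less_exp[of M] by simp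
    also have "\<dots> \<le> 2 ^ (4 * M)" if "M > 0" using that by (intro power_increasing) auto
    finally show ?thesis by (cases "M = 0") simp_all
  qed
  have "4 * M * L * 2 ^ (4 * M) \<le> 4 * M * (2 * (L - 1)) * 2 ^ (4 * M)"
    using assms(1) by (intro mult_le_mono) auto
  also have "\<dots> = 4 * (L - 1) * (2 * M) * 2 ^ (4 * M)"
    by simp
  also have "\<dots> \<le> 4 * (L - 1) * 2 ^ (4 * M) * 2 ^ (4 * M)"
    using \<open>2 * M \<le> 2 ^ (4 * M)\<close> by (intro mult_le_mono) auto
  also have "\<dots> = 2 ^ (8 * M + 2) * (L - 1)"
    by (simp add: power_add[symmetric] algebra_simps)
  finally have "real (4 * M * L * 2 ^ (4 * M)) \<le> real (2 ^ (8 * M + 2) * (L - 1))"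
    by (simp only: of_nat_le_iff)
  also have "\<dots> = 2 powr real (8 * M + 2) * (real L - 1)"
    using assms(1) powr_realpow[of 2 "8 * M + 2"] by (simp add: of_nat_diff)
  also have "\<dots> = 2 powr (real (8 * M + 2) + log 2 (real L - 1))"
    using assms(1) by (simp add: powr_add)
  also have "\<dots> < 2 powr d"
    using assms(2) by simp
  finally show ?thesis .
qed

theorem lemma5:
  fixes E :: "('v \<times> 'v) set" and N :: nat and s t :: "nat \<Rightarrow> 'v"
    and P :: "nat \<Rightarrow> 'v list set" and p ps :: "nat \<Rightarrow> 'v list" and k :: nat
  assumes "routing_game E N s t P"
    and "nash_routing N P p"
    and "optimal_routing E N P ps"
    and "Lstar N ps \<ge> 2"
    and "k \<ge> 1"
    and "real_of_int (Chat N p - int k) >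
           8 * real (social_cost E N ps) + log 2 (real (Lstar N ps) - 1) + 2"
  shows "\<forall>S. S \<noteq> {} \<and> S \<subseteq> (\<Union>i\<in>{1..k}. stage N p i) \<longrightarrow> \<not> self_sufficient N p ps S"
proof (intro allI impI notI)
  fix S assume S: "S \<noteq> {} \<and> S \<subseteq> (\<Union>i\<in>{1..k}. stage N p i)"
    and "self_sufficient N p ps S"
  define B where "B = 4 * social_cost E N ps * Lstar N ps * 2 ^ (4 * social_cost E N ps)"
  have "S \<subseteq> {..<N}" using S unfolding stage_def by auto
  then have "finite S" using finite_subset by blast
  have "real B < real (pcost N p j)" if "j \<in> S" for j
  proof -
    have "2 powr real_of_int (Chat N p - int k) + 2 \<le> real (pcost N p j)"
      using S that by (intro stage_pcost_lower) blast
    then show ?thesis using cost_bound_less_two_powr[OF assms(4,6)] unfolding B_def by linarith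
  qed
  then have "(\<Sum>j\<in>S. real B) < (\<Sum>j\<in>S. real (pcost N p j))"
    using \<open>finite S\<close> S by (intro sum_strict_mono) auto
  moreover have "(\<Sum>j\<in>S. pcost N p j) \<le> card S * B"
    using self_sufficient_sum_pcost_le[OF assms(1) _ \<open>S \<subseteq> {..<N}\<close> \<open>self_sufficient N p ps S\<close>]
      assms(3) unfolding optimal_routing_def B_def by (simp add: algebra_simps)
  then have "real (\<Sum>j\<in>S. pcost N p j) \<le> real (card S) * real B"
    by (metis of_nat_le_iff of_nat_mult)
  ultimately show False by simp
qed

end
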